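(* In $TTR$, let $T^-\in\Omega^-$ and $T^+\in\Omega^+$. (1) If $T^-\subseteq A$, then $A\in\Omega^-$ and $Fv_2(A)\subseteq Fv_2(T^-)$. (2) If $B\subseteq T^+$, then $B\in\Omega^+$ and $Fv_2(B)\subseteq Fv_2(T^+)$.
   Context: $TTR$ types: over a second-order language with first-order variables, function symbols, $n$-ary predicate variables and symbols, and a fixed system $\mathbf E$ of equations; atomic formulas $\perp$ and $X(t_1,\dots,t_n)$; constructors $\to$, $\forall x$, $\forall X$, and $\mu Cx_1\dots x_nA\langle t_1,\dots,t_n\rangle$ for $C$ an $n$-ary predicate symbol occurring and positive in $A$ ($C,\bar x$ bound). Positivity: $X$ is positive and negative in $A$ if it does not occur; positive not negative in $X(\bar t)$; polarity flips on the left of $\to$ and is unchanged on the right, under $\forall v$ ($v\ne X$) and under $\mu$. Subtyping $\subseteq$ is generated by: reflexivity; $A\subseteq A',B\subseteq B'\Rightarrow A'\to B\subseteq A\to B'$; $A[G/v]\subseteq B\Rightarrow\forall vA\subseteq B$; $A\subseteq B\Rightarrow A\subseteq\forall vB$ ($v$ not free in $A$); $A\subseteq B[v/y]\Rightarrow A\subseteq B[w/y]$ for $v=w$ an instance of an equation of $\mathbf E$; transitivity; $D[\mu C\bar xD\langle\bar z\rangle/C(\bar z)][\bar t/\bar x]\subseteq\mu C\bar xD\langle\bar t\rangle$ and its converse; $D[E/C(\bar x)]\subseteq E\Rightarrow\mu C\bar xD\langle\bar t\rangle\subseteq E[\bar t/\bar x]$. $\forall$-positive types $\Omega^+$ and $\forall$-negative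 types $\Omega^-$: atomic types are in both; if $T^+\in\Omega^+$, $T^-\in\Omega^-$ then $T^-\to T^+\in\Omega^+$ and $T^+\to T^-\in\Omega^-$; if $T^+\in\Omega^+$ then $\forall xT^+\in\Omega^+$ and $\forall XT^+\in\Omega^+$; if $T^-\in\Omega^-$ then $\forall xT^-\in\Omega^-$, and $\forall XT^-\in\Omega^-$ provided $X$ is not free in $T^-$; if $T^+\in\Omega^+$ and $C$ is an $n$-ary predicate symbol occurring and positive in $T^+$, then $\mu Cx_1\dots x_nT^+\langle t_1,\dots,t_n\rangle\in\Omega^+$. $Fv_2(T)$ is the set of free predicate variables and free predicate symbols of $T$ (with $\perp$ counted as a 0-ary predicate symbol). *)

theory Defs
  imports Main
begin

section \<open>Syntax of TTR (locally nameless representation)\<close>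

text \<open>Free variables/symbols are names, bound ones
are de Bruijn indices.  There are three separate index spaces: first-order variables
(bound by \<open>\<forall>x\<close> and by the \<open>x1..xn\<close> of \<open>\<mu>\<close>), predicate variables (bound by \<open>\<forall>X\<close>) and
predicate symbols (bound by \<open>\<mu>\<close>).  The arity of a predicate occurrence is the length
of its argument list; a predicate is identified by its name together with its arity.\<close>

datatype trm = FV nat | BV nat | Fn nat "trm list"

datatype ty =
    Bot
  | PVar nat "trm list"
  | PSym nat "trm list"
  | BPV nat "trm list"      \<comment> \<open>bound predicate variable (index into \<forall>X binders)\<close>
  | BPS nat "trm list"      \<comment> \<open>bound predicate symbol (index into \<mu> binders)\<close>
  | Imp ty ty
  | All1 ty
  | All2 nat ty             \<comment> \<open>\<forall>X A, X of the given arity\<close>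
  | Mu ty "trm list"        \<comment> \<open>\<mu> C x1..xn A \<langle>t1..tn\<rangle>, n = length of the list;
                                 in A: symbol index 0 is C, first-order indices 0..n-1 are x1..xn\<close>

fun wft :: "nat \<Rightarrow> trm \<Rightarrow> bool" where
  "wft k (FV x) = True"
| "wft k (BV i) = (i < k)"
| "wft k (Fn f ts) = (\<forall>t\<in>set ts. wft k t)"

text \<open>Occurrence and polarity of the bound predicate symbol with index k.
\<open>pol True\<close> = positive, \<open>pol False\<close> = negative.\<close>

fun occS :: "nat \<Rightarrow> ty \<Rightarrow> bool" where
  "occS k Bot = False"
| "occS k (PVar X ts) = False"
| "occS k (PSym C ts) = False"
| "occS k (BPV i ts) = False"
| "occS k (BPS i ts) = (i = k)"
| "occS k (Imp A B) = (occS k A \<or> occS k B)"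
| "occS k (All1 A) = occS k A"
| "occS k (All2 n A) = occS k A"
| "occS k (Mu A ts) = occS (Suc k) A"

fun pol :: "bool \<Rightarrow> nat \<Rightarrow> ty \<Rightarrow> bool" where
  "pol p k Bot = True"
| "pol p k (PVar X ts) = True"
| "pol p k (PSym C ts) = True"
| "pol p k (BPV i ts) = True"
| "pol p k (BPS i ts) = (if i = k then p else True)"
| "pol p k (Imp A B) = (pol (\<not> p) k A \<and> pol p k B)"
| "pol p k (All1 A) = pol p k A"
| "pol p k (All2 n A) = pol p k A"
| "pol p k (Mu A ts) = pol p (Suc k) A"

fun occV :: "nat \<Rightarrow> ty \<Rightarrow> bool" where
  "occV k Bot = False"
| "occV k (PVar X ts) = False"
| "occV k (PSym C ts) = False"
| "occV k (BPV i ts) = (i = k)"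
| "occV k (BPS i ts) = False"
| "occV k (Imp A B) = (occV k A \<or> occV k B)"
| "occV k (All1 A) = occV k A"
| "occV k (All2 n A) = occV (Suc k) A"
| "occV k (Mu A ts) = occV k A"

text \<open>\<open>wfty k V S A\<close>: A is well formed with k first-order bound variables in scope,
predicate-variable binders of arities V and predicate-symbol binders of arities S.\<close>
fun wfty :: "nat \<Rightarrow> nat list \<Rightarrow> nat list \<Rightarrow> ty \<Rightarrow> bool" where
  "wfty k V S Bot = True"
| "wfty k V S (PVar X ts) = (\<forall>t\<in>set ts. wft k t)"
| "wfty k V S (PSym C ts) = (\<forall>t\<in>set ts. wft k t)"
| "wfty k V S (BPV i ts) = (i < length V \<and> V ! i = length ts \<and> (\<forall>t\<in>set ts. wft k t))"
| "wfty k V S (BPS i ts) = (i < length S \<and> S ! i = length ts \<and> (\<forall>t\<in>set ts. wft k t))"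
| "wfty k V S (Imp A B) = (wfty k V S A \<and> wfty k V S B)"
| "wfty k V S (All1 A) = wfty (Suc k) V S A"
| "wfty k V S (All2 n A) = wfty k (n # V) S A"
| "wfty k V S (Mu A ts) = (wfty (k + length ts) V (length ts # S) A
      \<and> (\<forall>t\<in>set ts. wft k t) \<and> occS 0 A \<and> pol True 0 A)"

abbreviation lct :: "trm \<Rightarrow> bool" where "lct t \<equiv> wft 0 t"
abbreviation lc :: "ty \<Rightarrow> bool" where "lc A \<equiv> wfty 0 [] [] A"

fun fvt :: "trm \<Rightarrow> nat set" where
  "fvt (FV x) = {x}"
| "fvt (BV i) = {}"
| "fvt (Fn f ts) = (\<Union>t\<in>set ts. fvt t)"

fun fv1 :: "ty \<Rightarrow> nat set" where
  "fv1 Bot = {}"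
| "fv1 (PVar X ts) = (\<Union>t\<in>set ts. fvt t)"
| "fv1 (PSym C ts) = (\<Union>t\<in>set ts. fvt t)"
| "fv1 (BPV i ts) = (\<Union>t\<in>set ts. fvt t)"
| "fv1 (BPS i ts) = (\<Union>t\<in>set ts. fvt t)"
| "fv1 (Imp A B) = fv1 A \<union> fv1 B"
| "fv1 (All1 A) = fv1 A"
| "fv1 (All2 n A) = fv1 A"
| "fv1 (Mu A ts) = fv1 A \<union> (\<Union>t\<in>set ts. fvt t)"

text \<open>Second-order free names: \<bottom> (a 0-ary predicate symbol), predicate variables and
predicate symbols, each with its arity.\<close>
datatype p2 = P2Bot | P2Var nat nat | P2Sym nat nat

fun Fv2 :: "ty \<Rightarrow> p2 set" where
  "Fv2 Bot = {P2Bot}"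
| "Fv2 (PVar X ts) = {P2Var X (length ts)}"
| "Fv2 (PSym C ts) = {P2Sym C (length ts)}"
| "Fv2 (BPV i ts) = {}"
| "Fv2 (BPS i ts) = {}"
| "Fv2 (Imp A B) = Fv2 A \<union> Fv2 B"
| "Fv2 (All1 A) = Fv2 A"
| "Fv2 (All2 n A) = Fv2 A"
| "Fv2 (Mu A ts) = Fv2 A"

fun liftt :: "nat \<Rightarrow> trm \<Rightarrow> trm" where
  "liftt d (FV x) = FV x"
| "liftt d (BV i) = BV (i + d)"
| "liftt d (Fn f ts) = Fn f (map (liftt d) ts)"

text \<open>\<open>instt d us t\<close>: replace the bound first-order variables d..d+n-1 (n = length us)
by us (lifted past the d inner binders).\<close>
fun instt :: "nat \<Rightarrow> trm list \<Rightarrow> trm \<Rightarrow> trm" where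
  "instt d us (FV x) = FV x"
| "instt d us (BV i) = (if i < d then BV i
      else if i - d < length us then liftt d (us ! (i - d)) else BV (i - length us))"
| "instt d us (Fn f ts) = Fn f (map (instt d us) ts)"

fun instT :: "nat \<Rightarrow> trm list \<Rightarrow> ty \<Rightarrow> ty" where
  "instT d us Bot = Bot"
| "instT d us (PVar X ts) = PVar X (map (instt d us) ts)"
| "instT d us (PSym C ts) = PSym C (map (instt d us) ts)"
| "instT d us (BPV i ts) = BPV i (map (instt d us) ts)"
| "instT d us (BPS i ts) = BPS i (map (instt d us) ts)"
| "instT d us (Imp A B) = Imp (instT d us A) (instT d us B)"
| "instT d us (All1 A) = All1 (instT (Suc d) us A)"
| "instT d us (All2 n A) = All2 n (instT d us A)"
| "instT d us (Mu A ts) = Mu (instT (d + length ts) us A) (map (instt d us) ts)"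

text \<open>Opening a predicate-variable binder: replace \<open>X(t1..tn)\<close> (X = bound variable k)
by \<open>G[t1..tn/x1..xn]\<close>, where G is an abstraction whose parameters are the
first-order bound indices 0..n-1.\<close>
fun openV :: "nat \<Rightarrow> ty \<Rightarrow> ty \<Rightarrow> ty" where
  "openV k G Bot = Bot"
| "openV k G (PVar X ts) = PVar X ts"
| "openV k G (PSym C ts) = PSym C ts"
| "openV k G (BPV i ts) = (if i = k then instT 0 ts G
      else if k < i then BPV (i - 1) ts else BPV i ts)"
| "openV k G (BPS i ts) = BPS i ts"
| "openV k G (Imp A B) = Imp (openV k G A) (openV k G B)"
| "openV k G (All1 A) = All1 (openV k G A)"
| "openV k G (All2 n A) = All2 n (openV (Suc k) G A)"
| "openV k G (Mu A ts) = Mu (openV k G A) ts"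

text \<open>The same for a predicate-symbol binder (\<open>D[E/C(x1..xn)]\<close>).\<close>
fun openS :: "nat \<Rightarrow> ty \<Rightarrow> ty \<Rightarrow> ty" where
  "openS k G Bot = Bot"
| "openS k G (PVar X ts) = PVar X ts"
| "openS k G (PSym C ts) = PSym C ts"
| "openS k G (BPV i ts) = BPV i ts"
| "openS k G (BPS i ts) = (if i = k then instT 0 ts G
      else if k < i then BPS (i - 1) ts else BPS i ts)"
| "openS k G (Imp A B) = Imp (openS k G A) (openS k G B)"
| "openS k G (All1 A) = All1 (openS k G A)"
| "openS k G (All2 n A) = All2 n (openS k G A)"
| "openS k G (Mu A ts) = Mu (openS (Suc k) G A) ts"

fun idx :: "nat list \<Rightarrow> nat \<Rightarrow> nat" where
  "idx [] x = 0"
| "idx (y # ys) x = (if y = x then 0 else Suc (idx ys x))"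

text \<open>Closing: the free first-order variables xs!j become the bound index j.\<close>
fun closet :: "nat list \<Rightarrow> nat \<Rightarrow> trm \<Rightarrow> trm" where
  "closet xs d (FV x) = (if x \<in> set xs then BV (d + idx xs x) else FV x)"
| "closet xs d (BV i) = BV i"
| "closet xs d (Fn f ts) = Fn f (map (closet xs d) ts)"

fun closeT :: "nat list \<Rightarrow> nat \<Rightarrow> ty \<Rightarrow> ty" where
  "closeT xs d Bot = Bot"
| "closeT xs d (PVar X ts) = PVar X (map (closet xs d) ts)"
| "closeT xs d (PSym C ts) = PSym C (map (closet xs d) ts)"
| "closeT xs d (BPV i ts) = BPV i (map (closet xs d) ts)"
| "closeT xs d (BPS i ts) = BPS i (map (closet xs d) ts)"
| "closeT xs d (Imp A B) = Imp (closeT xs d A) (closeT xs d B)"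
| "closeT xs d (All1 A) = All1 (closeT xs (Suc d) A)"
| "closeT xs d (All2 n A) = All2 n (closeT xs d A)"
| "closeT xs d (Mu A ts) = Mu (closeT xs (d + length ts) A) (map (closet xs d) ts)"

fun closeV :: "nat \<Rightarrow> nat \<Rightarrow> nat \<Rightarrow> ty \<Rightarrow> ty" where
  "closeV X n k Bot = Bot"
| "closeV X n k (PVar Y ts) = (if Y = X \<and> length ts = n then BPV k ts else PVar Y ts)"
| "closeV X n k (PSym C ts) = PSym C ts"
| "closeV X n k (BPV i ts) = BPV i ts"
| "closeV X n k (BPS i ts) = BPS i ts"
| "closeV X n k (Imp A B) = Imp (closeV X n k A) (closeV X n k B)"
| "closeV X n k (All1 A) = All1 (closeV X n k A)"
| "closeV X n k (All2 m A) = All2 m (closeV X n (Suc k) A)"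
| "closeV X n k (Mu A ts) = Mu (closeV X n k A) ts"

fun substt :: "(nat \<Rightarrow> trm) \<Rightarrow> trm \<Rightarrow> trm" where
  "substt \<sigma> (FV x) = \<sigma> x"
| "substt \<sigma> (BV i) = BV i"
| "substt \<sigma> (Fn f ts) = Fn f (map (substt \<sigma>) ts)"

fun substT :: "(nat \<Rightarrow> trm) \<Rightarrow> ty \<Rightarrow> ty" where
  "substT \<sigma> Bot = Bot"
| "substT \<sigma> (PVar X ts) = PVar X (map (substt \<sigma>) ts)"
| "substT \<sigma> (PSym C ts) = PSym C (map (substt \<sigma>) ts)"
| "substT \<sigma> (BPV i ts) = BPV i (map (substt \<sigma>) ts)"
| "substT \<sigma> (BPS i ts) = BPS i (map (substt \<sigma>) ts)"
| "substT \<sigma> (Imp A B) = Imp (substT \<sigma> A) (substT \<sigma> B)"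
| "substT \<sigma> (All1 A) = All1 (substT \<sigma> A)"
| "substT \<sigma> (All2 n A) = All2 n (substT \<sigma> A)"
| "substT \<sigma> (Mu A ts) = Mu (substT \<sigma> A) (map (substt \<sigma>) ts)"

text \<open>\<open>D[\<mu>C x1..xn D\<langle>z1..zn\<rangle>/C(z1..zn)][t1..tn/x1..xn]\<close> for \<open>Mu D ts\<close>.\<close>
definition unfoldMu :: "ty \<Rightarrow> trm list \<Rightarrow> ty" where
  "unfoldMu D ts = instT 0 ts (openS 0 (Mu D (map BV [0..<length ts])) D)"

definition eq_inst :: "(trm \<times> trm) set \<Rightarrow> trm \<Rightarrow> trm \<Rightarrow> bool" where
  "eq_inst E v w \<longleftrightarrow> (\<exists>l r \<sigma>. (l, r) \<in> E \<and> v = substt \<sigma> l \<and> w = substt \<sigma> r)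
                        \<and> lct v \<and> lct w"

inductive sub :: "(trm \<times> trm) set \<Rightarrow> ty \<Rightarrow> ty \<Rightarrow> bool" for E where
  refl: "lc A \<Longrightarrow> sub E A A"
| arrow: "sub E A A' \<Longrightarrow> sub E B B' \<Longrightarrow> sub E (Imp A' B) (Imp A B')"
| all1E: "lc (All1 A) \<Longrightarrow> lct t \<Longrightarrow> sub E (instT 0 [t] A) B \<Longrightarrow> sub E (All1 A) B"
| all2E: "lc (All2 n A) \<Longrightarrow> wfty n [] [] G \<Longrightarrow> sub E (openV 0 G A) B \<Longrightarrow> sub E (All2 n A) B"
| all1I: "sub E A B \<Longrightarrow> y \<notin> fv1 A \<Longrightarrow> sub E A (All1 (closeT [y] 0 B))"
| all2I: "sub E A B \<Longrightarrow> P2Var X n \<notin> Fv2 A \<Longrightarrow> sub E A (All2 n (closeV X n 0 B))"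
| eqn: "sub E A (substT (FV(y := v)) B) \<Longrightarrow> eq_inst E v w \<Longrightarrow> lc B
         \<Longrightarrow> sub E A (substT (FV(y := w)) B)"
| trans: "sub E A B \<Longrightarrow> sub E B C \<Longrightarrow> sub E A C"
| muFold: "lc (Mu D ts) \<Longrightarrow> sub E (unfoldMu D ts) (Mu D ts)"
| muUnfold: "lc (Mu D ts) \<Longrightarrow> sub E (Mu D ts) (unfoldMu D ts)"
| muInd: "lc (Mu D ts) \<Longrightarrow> lc F \<Longrightarrow> distinct xs \<Longrightarrow> length xs = length ts
         \<Longrightarrow> set xs \<inter> fv1 D = {}
         \<Longrightarrow> sub E (openS 0 (closeT xs 0 F) (instT 0 (map FV xs) D)) F
         \<Longrightarrow> sub E (Mu D ts) (instT 0 ts (closeT xs 0 F))"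

subsection \<open>\<forall>-positive and \<forall>-negative types\<close>

fun atomic :: "ty \<Rightarrow> bool" where
  "atomic Bot = True"
| "atomic (PVar X ts) = True"
| "atomic (PSym C ts) = True"
| "atomic (BPV i ts) = True"
| "atomic (BPS i ts) = True"
| "atomic _ = False"

inductive_set OmegaP :: "ty set" and OmegaN :: "ty set" where
  atP: "atomic A \<Longrightarrow> A \<in> OmegaP"
| atN: "atomic A \<Longrightarrow> A \<in> OmegaN"
| impP: "Tp \<in> OmegaP \<Longrightarrow> Tn \<in> OmegaN \<Longrightarrow> Imp Tn Tp \<in> OmegaP"
| impN: "Tp \<in> OmegaP \<Longrightarrow> Tn \<in> OmegaN \<Longrightarrow> Imp Tp Tn \<in> OmegaN"
| all1P: "Tp \<in> OmegaP \<Longrightarrow> All1 Tp \<in> OmegaP"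
| all2P: "Tp \<in> OmegaP \<Longrightarrow> All2 n Tp \<in> OmegaP"
| all1N: "Tn \<in> OmegaN \<Longrightarrow> All1 Tn \<in> OmegaN"
| all2N: "Tn \<in> OmegaN \<Longrightarrow> \<not> occV 0 Tn \<Longrightarrow> All2 n Tn \<in> OmegaN"
| muP: "Tp \<in> OmegaP \<Longrightarrow> occS 0 Tp \<Longrightarrow> pol True 0 Tp \<Longrightarrow> Mu Tp ts \<in> OmegaP"

end

theory Submission
  imports Defs
begin

text \<open>Both parts are proved together by induction on the derivation of \<open>A \<subseteq> B\<close>:
\<open>\<Omega>\<^sup>-\<close> is closed upwards and \<open>\<Omega>\<^sup>+\<close> downwards along \<open>\<subseteq>\<close>, and \<open>Fv\<^sub>2\<close> can only shrink
in that direction.  Operations on first-order terms (instantiation, closing, equations)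
do not touch the second-order structure.  Instantiating \<open>\<forall>X T\<^sup>-\<close> changes nothing, since
\<open>X\<close> does not occur in \<open>T\<^sup>-\<close>; and a \<open>\<forall>X\<close> introduced on the right of a subtype of \<open>T\<^sup>-\<close>
is vacuous as well, because \<open>X \<notin> Fv\<^sub>2(T\<^sup>-)\<close>.  A \<open>\<mu>\<close>-type is never in \<open>\<Omega>\<^sup>-\<close>, and neither is its
unfolding, which places a \<open>\<mu>\<close>-type at the positive occurrences of \<open>C\<close>; in \<open>\<Omega>\<^sup>+\<close> the
unfolding substitutes a \<open>\<forall>\<close>-positive type at positive occurrences only.\<close>

lemma OmegaP_OmegaN_simps [simp]:
  "Bot \<in> OmegaP" "Bot \<in> OmegaN"
  "PVar X ts \<in> OmegaP" "PVar X ts \<in> OmegaN"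
  "PSym C ts \<in> OmegaP" "PSym C ts \<in> OmegaN"
  "BPV i ts \<in> OmegaP" "BPV i ts \<in> OmegaN"
  "BPS i ts \<in> OmegaP" "BPS i ts \<in> OmegaN"
  "Imp A B \<in> OmegaP \<longleftrightarrow> A \<in> OmegaN \<and> B \<in> OmegaP"
  "Imp A B \<in> OmegaN \<longleftrightarrow> A \<in> OmegaP \<and> B \<in> OmegaN"
  "All1 A \<in> OmegaP \<longleftrightarrow> A \<in> OmegaP"
  "All1 A \<in> OmegaN \<longleftrightarrow> A \<in> OmegaN"
  "All2 n A \<in> OmegaP \<longleftrightarrow> A \<in> OmegaP"
  "All2 n A \<in> OmegaN \<longleftrightarrow> A \<in> OmegaN \<and> \<not> occV 0 A"
  "Mu A ts \<in> OmegaP \<longleftrightarrow> A \<in> OmegaP \<and> occS 0 A \<and> pol True 0 A"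
  "Mu A ts \<notin> OmegaN"
  by (auto intro: OmegaP_OmegaN.intros elim: OmegaP.cases OmegaN.cases)

lemma pol_if_not_occS: "\<not> occS k A \<Longrightarrow> pol p k A"
  by (induction A arbitrary: k p) auto

lemma
  shows occS_instT [simp]: "occS k (instT d us A) = occS k A"
    and pol_instT [simp]: "pol p k (instT d us A) = pol p k A"
    and occV_instT [simp]: "occV k (instT d us A) = occV k A"
    and Fv2_instT [simp]: "Fv2 (instT d us A) = Fv2 A"
  by (induction A arbitrary: d k p) auto

lemma
  shows instT_in_OmegaP_iff [simp]: "instT d us A \<in> OmegaP \<longleftrightarrow> A \<in> OmegaP"
    and instT_in_OmegaN_iff [simp]: "instT d us A \<in> OmegaN \<longleftrightarrow> A \<in> OmegaN"
  by (induction A arbitrary: d) auto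

lemma
  shows occS_closeT [simp]: "occS k (closeT xs d A) = occS k A"
    and pol_closeT [simp]: "pol p k (closeT xs d A) = pol p k A"
    and occV_closeT [simp]: "occV k (closeT xs d A) = occV k A"
    and Fv2_closeT [simp]: "Fv2 (closeT xs d A) = Fv2 A"
  by (induction A arbitrary: d k p) auto

lemma
  shows closeT_in_OmegaP_iff [simp]: "closeT xs d A \<in> OmegaP \<longleftrightarrow> A \<in> OmegaP"
    and closeT_in_OmegaN_iff [simp]: "closeT xs d A \<in> OmegaN \<longleftrightarrow> A \<in> OmegaN"
  by (induction A arbitrary: d) auto

lemma
  shows occS_substT [simp]: "occS k (substT \<sigma> A) = occS k A"
    and pol_substT [simp]: "pol p k (substT \<sigma> A) = pol p k A"
    and occV_substT [simp]: "occV k (substT \<sigma> A) = occV k A"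
    and Fv2_substT [simp]: "Fv2 (substT \<sigma> A) = Fv2 A"
  by (induction A arbitrary: k p) auto

lemma
  shows substT_in_OmegaP_iff [simp]: "substT \<sigma> A \<in> OmegaP \<longleftrightarrow> A \<in> OmegaP"
    and substT_in_OmegaN_iff [simp]: "substT \<sigma> A \<in> OmegaN \<longleftrightarrow> A \<in> OmegaN"
  by (induction A) auto

lemma wfty_occV_less: "wfty k V S A \<Longrightarrow> occV j A \<Longrightarrow> j < length V"
  by (induction A arbitrary: k V S j) fastforce+

lemma wfty_occS_less: "wfty k V S A \<Longrightarrow> occS j A \<Longrightarrow> j < length S"
  by (induction A arbitrary: k V S j) fastforce+

lemma wfty_Mu_closed:
  assumes "wfty k [] [n] D"
  shows "\<not> occS i (Mu D us)" and "\<not> occV i (Mu D us)"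
  using wfty_occS_less[OF assms, of "Suc i"] wfty_occV_less[OF assms, of i] by auto

lemma occV_openV_vacuous:
  "\<not> occV k A \<Longrightarrow> occV j (openV k G A) \<longleftrightarrow> occV (if j < k then j else Suc j) A"
  by (induction A arbitrary: j k) auto

lemma
  assumes "\<not> occV k A"
  shows occS_openV_vacuous: "occS j (openV k G A) = occS j A"
    and pol_openV_vacuous: "pol p j (openV k G A) = pol p j A"
    and Fv2_openV_vacuous: "Fv2 (openV k G A) = Fv2 A"
  using assms by (induction A arbitrary: j k p) auto

lemma openV_vacuous_in_Omega:
  "\<not> occV k A \<Longrightarrow> (A \<in> OmegaP \<longrightarrow> openV k G A \<in> OmegaP) \<and> (A \<in> OmegaN \<longrightarrow> openV k G A \<in> OmegaN)"
  by (induction A arbitrary: k)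
    (auto simp: occS_openV_vacuous pol_openV_vacuous occV_openV_vacuous)

lemma
  assumes "\<forall>i. \<not> occS i G"
  shows occS_openV: "occS j (openV k G A) = occS j A"
    and pol_openV: "pol p j (openV k G A) = pol p j A"
  using assms by (induction A arbitrary: j k p) (auto simp: pol_if_not_occS)

lemma occV_openV_below: "j < k \<Longrightarrow> occV j A \<Longrightarrow> occV j (openV k G A)"
  by (induction A arbitrary: j k) auto

lemma Fv2_subset_openV: "Fv2 A \<subseteq> Fv2 (openV k G A)"
  by (induction A arbitrary: k) auto

lemma Omega_reflect_openV:
  "\<forall>i. \<not> occS i G \<Longrightarrow>
    (openV k G A \<in> OmegaP \<longrightarrow> A \<in> OmegaP) \<and> (openV k G A \<in> OmegaN \<longrightarrow> A \<in> OmegaN)"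
proof (induction A arbitrary: k)
  case (All2 n A)
  then show ?case using occV_openV_below[of 0 "Suc k" A G] by auto
qed (auto simp: occS_openV pol_openV)

lemma occV_openS: "\<forall>i. \<not> occV i G \<Longrightarrow> occV j (openS k G A) = occV j A"
  by (induction A arbitrary: j k) auto

lemma occV_openS_mono: "occV j A \<Longrightarrow> occV j (openS k G A)"
  by (induction A arbitrary: j k) auto

lemma
  assumes "\<forall>i. \<not> occS i G" and "j < k"
  shows occS_openS_below: "occS j (openS k G A) = occS j A"
    and pol_openS_below: "pol p j (openS k G A) = pol p j A"
  using assms by (induction A arbitrary: j k p) (auto simp: pol_if_not_occS)

lemma Fv2_subset_openS: "Fv2 A \<subseteq> Fv2 (openS k G A)"
  by (induction A arbitrary: k) auto

lemma Fv2_openS_subset: "Fv2 (openS k G A) \<subseteq> Fv2 A \<union> Fv2 G"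
  by (induction A arbitrary: k) auto

lemma openS_in_Omega:
  assumes "G \<in> OmegaP" "\<forall>i. \<not> occS i G" "\<forall>i. \<not> occV i G"
  shows "(A \<in> OmegaP \<longrightarrow> pol True k A \<longrightarrow> openS k G A \<in> OmegaP)
       \<and> (A \<in> OmegaN \<longrightarrow> pol False k A \<longrightarrow> openS k G A \<in> OmegaN)"
  using assms
  by (induction A arbitrary: k) (auto simp: occV_openS occS_openS_below pol_openS_below)

lemma Omega_reflect_openS:
  "\<forall>i. \<not> occS i G \<Longrightarrow>
    (openS k G A \<in> OmegaP \<longrightarrow> A \<in> OmegaP) \<and> (openS k G A \<in> OmegaN \<longrightarrow> A \<in> OmegaN)"
  by (induction A arbitrary: k) (auto simp: occS_openS_below pol_openS_below dest: occV_openS_mono)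

text \<open>A \<open>\<mu>\<close>-type lies outside \<open>\<Omega>\<^sup>-\<close>, so it cannot be put at a positive position of
a \<open>\<forall>\<close>-negative type (nor at a negative one of a \<open>\<forall>\<close>-positive type).\<close>

lemma openS_Mu_in_Omega_pol:
  "occS k A \<Longrightarrow> (openS k (Mu D us) A \<in> OmegaN \<longrightarrow> \<not> pol True k A)
               \<and> (openS k (Mu D us) A \<in> OmegaP \<longrightarrow> \<not> pol False k A)"
  by (induction A arbitrary: k) auto

lemma Fv2_unfoldMu: "Fv2 (unfoldMu D ts) = Fv2 (Mu D ts)"
  using Fv2_subset_openS[of D 0] Fv2_openS_subset[of 0 "Mu D (map BV [0..<length ts])" D]
  by (auto simp: unfoldMu_def)

lemma occV_unfoldMu:
  assumes "lc (Mu D ts)"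
  shows "\<not> occV j (unfoldMu D ts)"
proof -
  have "\<forall>i. \<not> occV i D" using assms wfty_occV_less by fastforce
  then show ?thesis by (simp add: unfoldMu_def occV_openS)
qed

lemma unfoldMu_in_OmegaP_iff:
  assumes "lc (Mu D ts)"
  shows "unfoldMu D ts \<in> OmegaP \<longleftrightarrow> Mu D ts \<in> OmegaP"
proof -
  let ?G = "Mu D (map BV [0..<length ts])"
  have wf: "wfty (length ts) [] [length ts] D" and D: "occS 0 D" "pol True 0 D"
    using assms by auto
  have "\<forall>i. \<not> occS i ?G" "\<forall>i. \<not> occV i ?G"
    using wfty_Mu_closed[OF wf] by blast+
  then have "openS 0 ?G D \<in> OmegaP \<longleftrightarrow> D \<in> OmegaP"
    using Omega_reflect_openS[of ?G 0 D] openS_in_Omega[of ?G D 0] D by auto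
  then show ?thesis using D by (simp add: unfoldMu_def)
qed

lemma unfoldMu_not_in_OmegaN: "lc (Mu D ts) \<Longrightarrow> unfoldMu D ts \<notin> OmegaN"
  using openS_Mu_in_Omega_pol[of 0 D D "map BV [0..<length ts]"] by (auto simp: unfoldMu_def)

lemma closeV_fresh: "P2Var X n \<notin> Fv2 B \<Longrightarrow> closeV X n k B = B"
  by (induction B arbitrary: k) auto

lemma
  shows occS_closeV [simp]: "occS j (closeV X n k B) = occS j B"
    and pol_closeV [simp]: "pol p j (closeV X n k B) = pol p j B"
  by (induction B arbitrary: j k p) auto

lemma occV_closeV_mono: "occV j B \<Longrightarrow> occV j (closeV X n k B)"
  by (induction B arbitrary: j k) auto

lemma occV_closeV_cases: "occV j (closeV X n k B) \<Longrightarrow> occV j B \<or> j = k"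
  by (induction B arbitrary: j k) (auto split: if_splits)

lemma Fv2_closeV: "Fv2 B \<subseteq> Fv2 (closeV X n k B) \<union> {P2Var X n}"
  by (induction B arbitrary: k) auto

lemma Omega_reflect_closeV:
  "(closeV X n k B \<in> OmegaP \<longrightarrow> B \<in> OmegaP) \<and> (closeV X n k B \<in> OmegaN \<longrightarrow> B \<in> OmegaN)"
  by (induction B arbitrary: k) (auto dest: occV_closeV_mono)

lemma sub_not_occV: "sub E A B \<Longrightarrow> \<not> occV j A \<and> \<not> occV j B"
proof (induction arbitrary: j rule: sub.induct)
  case (refl A)
  then show ?case using wfty_occV_less by fastforce
next
  case (all2E n A G B)
  then show ?case using wfty_occV_less[of 0 "[n]" "[]" A "Suc j"] by auto
next
  case (all2I A B X n)
  then show ?case using occV_closeV_cases[of "Suc j" X n 0 B] by auto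
next
  case (muInd D ts F xs)
  then show ?case
    using wfty_occV_less[of "length ts" "[]" "[length ts]" D] wfty_occV_less[of 0 "[]" "[]" F]
    by auto
qed (use wfty_occV_less occV_unfoldMu in fastforce)+

lemma sub_OmegaN_OmegaP:
  "sub E A B \<Longrightarrow> (A \<in> OmegaN \<longrightarrow> B \<in> OmegaN \<and> Fv2 B \<subseteq> Fv2 A)
               \<and> (B \<in> OmegaP \<longrightarrow> A \<in> OmegaP \<and> Fv2 A \<subseteq> Fv2 B)"
proof (induction rule: sub.induct)
  case (all2E n A G B)
  have "\<forall>i. \<not> occS i G" using all2E(2) wfty_occS_less[of n "[]" "[]" G] by auto
  then show ?case
    using all2E.IH openV_vacuous_in_Omega[of 0 A G] Fv2_openV_vacuous[of 0 A G]
      Omega_reflect_openV[of G 0 A] Fv2_subset_openV[of A 0 G]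
    by auto
next
  case (all2I A B X n)
  have "closeV X n 0 B = B" if "Fv2 B \<subseteq> Fv2 A"
    using that all2I(2) closeV_fresh by blast
  moreover have "\<not> occV 0 B" using sub_not_occV[OF all2I(1)] by blast
  ultimately show ?case
    using all2I.IH all2I(2) Omega_reflect_closeV[of X n 0 B] Fv2_closeV[of B X n 0]
    by auto
next
  case (muInd D ts F xs)
  let ?G = "closeT xs 0 F"
  have "\<forall>i. \<not> occS i ?G" using wfty_occS_less[OF muInd(2)] by auto
  then show ?case
    using muInd Omega_reflect_openS[of ?G 0 "instT 0 (map FV xs) D"]
      Fv2_subset_openS[of "instT 0 (map FV xs) D" 0 ?G]
    by auto
qed (auto simp: unfoldMu_in_OmegaP_iff unfoldMu_not_in_OmegaN Fv2_unfoldMu)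

theorem theorem5p1:
  fixes E :: "(trm \<times> trm) set" and Tn Tp A B :: ty
  assumes "Tn \<in> OmegaN" and "Tp \<in> OmegaP"
  shows "(sub E Tn A \<longrightarrow> A \<in> OmegaN \<and> Fv2 A \<subseteq> Fv2 Tn)
       \<and> (sub E B Tp \<longrightarrow> B \<in> OmegaP \<and> Fv2 B \<subseteq> Fv2 Tp)"
  using sub_OmegaN_OmegaP assms by blast

end
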